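(* Let $w\geqslant 4$ be an even integer and let $L_1$ be the graph with vertex set $\mathbb{Z}_{w+1}\cup\{\infty\}$ whose edge set consists of all pairs of distinct vertices except the pairs $\{x,-x\}$ for $x\in\{1,\dots,w/2\}$ and the pairs $\{1,\infty\}$, $\{0,2\}$, $\{1,2\}$. Then (i) $\chi'(L_1)=w$; and (ii) in any proper $w$-edge colouring of $L_1$, the set of colours that hit vertex $1$ equals the set of colours that hit vertex $2$.
   Context: $\mathbb{Z}_{w+1}$ is the additive group of integers modulo $w+1$, and $\infty$ is an extra vertex. $\chi'$ denotes chromatic index. In an edge colouring, a colour hits a vertex if some edge of that colour is incident with it. *)

theory Defs
  imports Main
begin

text \<open>Simple graphs are given by their edge set, a set of 2-element vertex sets.
  An edge colouring with k colours uses the colours 0..k-1.\<close>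

definition proper_edge_colouring :: "'v set set \<Rightarrow> ('v set \<Rightarrow> nat) \<Rightarrow> nat \<Rightarrow> bool" where
  "proper_edge_colouring E c k \<longleftrightarrow>
     (\<forall>e\<in>E. c e < k) \<and>
     (\<forall>e\<in>E. \<forall>f\<in>E. e \<noteq> f \<and> e \<inter> f \<noteq> {} \<longrightarrow> c e \<noteq> c f)"

definition chromatic_index :: "'v set set \<Rightarrow> nat" where
  "chromatic_index E = (LEAST k. \<exists>c. proper_edge_colouring E c k)"

definition colours_at :: "'v set set \<Rightarrow> ('v set \<Rightarrow> nat) \<Rightarrow> 'v \<Rightarrow> nat set" where
  "colours_at E c v = {c e | e. e \<in> E \<and> v \<in> e}"

text \<open>Vertices: Some x for x in Z_(w+1) = {0..w}, None for infinity.
  The negative of x in {1..w/2} is w+1-x.\<close>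

definition L1_vertices :: "nat \<Rightarrow> nat option set" where
  "L1_vertices w = Some ` {0..w} \<union> {None}"

definition L1_removed :: "nat \<Rightarrow> nat option set set" where
  "L1_removed w = {{Some x, Some (w + 1 - x)} | x. 1 \<le> x \<and> x \<le> w div 2}
     \<union> {{Some 1, None}, {Some 0, Some 2}, {Some 1, Some 2}}"

definition L1 :: "nat \<Rightarrow> nat option set set" where
  "L1 w = {{u, v} | u v. u \<in> L1_vertices w \<and> v \<in> L1_vertices w \<and> u \<noteq> v}
          - L1_removed w"

end

theory Submission
  imports Defs "HOL-Number_Theory.Cong"
begin

text \<open>Every vertex other than 1 and 2 is adjacent to all but one other vertex, so it has
  degree w, which bounds the chromatic index from below. A w-colouring comes from the
  near-one-factorisation {a, b} \<mapsto> (a + b) / 2 of the complete graph on the integers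
  modulo w + 1: the deleted pairs {x, -x} form one colour class, and \<infinity> takes at each
  vertex the colour missing there (at 0, that of the deleted edge {0, 2}). In a w-colouring every vertex other than 1 and 2 sees
  all colours, so a colour seen at 1 but not at 2 would be a perfect matching on the w + 1
  vertices other than 2, an odd number.\<close>

lemma card_2_doubleton_containing:
  assumes "card e = 2" "v \<in> e"
  obtains u where "e = {v, u}" "u \<noteq> v"
proof -
  obtain x y where e: "e = {x, y}" "x \<noteq> y" using assms(1) unfolding card_2_iff by blast
  then have "e = {v, if v = x then y else x}" using assms(2) by auto
  then show ?thesis using e by (intro that) auto
qed

lemma card_incident_edges_eq_card_neighbours:
  assumes "\<forall>e\<in>E. card e = 2"
  shows "card {e \<in> E. v \<in> e} = card {u. {v, u} \<in> E}"
proof -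
  have "bij_betw (\<lambda>u. {v, u}) {u. {v, u} \<in> E} {e \<in> E. v \<in> e}"
  proof (rule bij_betw_imageI)
    show "inj_on (\<lambda>u. {v, u}) {u. {v, u} \<in> E}"
      by (rule inj_onI) (auto simp: doubleton_eq_iff)
    show "(\<lambda>u. {v, u}) ` {u. {v, u} \<in> E} = {e \<in> E. v \<in> e}"
    proof (intro equalityI subsetI)
      fix e assume e: "e \<in> {e \<in> E. v \<in> e}"
      then have "card e = 2" "v \<in> e" using assms by auto
      then obtain u where "e = {v, u}" by (rule card_2_doubleton_containing)
      with e show "e \<in> (\<lambda>u. {v, u}) ` {u. {v, u} \<in> E}" by auto
    qed auto
  qed
  from bij_betw_same_card[OF this] show ?thesis by (rule sym)
qed

lemma colours_at_subset_lessThan: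
  "proper_edge_colouring E c k \<Longrightarrow> colours_at E c v \<subseteq> {..<k}"
  by (auto simp: colours_at_def proper_edge_colouring_def)

lemma card_colours_at:
  assumes "proper_edge_colouring E c k"
  shows "card (colours_at E c v) = card {e \<in> E. v \<in> e}"
proof -
  have "colours_at E c v = c ` {e \<in> E. v \<in> e}"
    by (auto simp: colours_at_def)
  moreover have "inj_on c {e \<in> E. v \<in> e}"
    using assms by (auto simp: inj_on_def proper_edge_colouring_def)
  ultimately show ?thesis by (simp add: card_image)
qed

lemma card_incident_edges_le:
  assumes "proper_edge_colouring E c k"
  shows "card {e \<in> E. v \<in> e} \<le> k"
  using card_mono[OF _ colours_at_subset_lessThan[OF assms]] card_colours_at[OF assms] by simp

lemma colours_at_eq_lessThan:
  assumes "proper_edge_colouring E c k" "card {e \<in> E. v \<in> e} = k"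
  shows "colours_at E c v = {..<k}"
  using card_subset_eq[OF _ colours_at_subset_lessThan[OF assms(1)]] card_colours_at[OF assms(1)] assms(2)
  by simp

lemma even_card_Union_matching:
  assumes "finite M" "\<forall>e\<in>M. card e = 2" "pairwise disjnt M"
  shows "even (card (\<Union>M))"
proof -
  have "card (\<Union>M) = sum card M"
    using assms by (intro card_Union_disjoint) (auto intro: card_ge_0_finite)
  also have "\<dots> = 2 * card M" using assms(2) by simp
  finally show ?thesis by simp
qed

lemma colours_at_subset_by_parity:
  assumes c: "proper_edge_colouring E c k"
    and E: "\<forall>e\<in>E. card e = 2 \<and> e \<subseteq> V" and V: "finite V" "even (card V)" "t \<in> V"
    and full: "\<forall>v\<in>V - {s, t}. card {e \<in> E. v \<in> e} = k"
  shows "colours_at E c s \<subseteq> colours_at E c t"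
proof
  fix j assume js: "j \<in> colours_at E c s"
  show "j \<in> colours_at E c t"
  proof (rule ccontr)
    assume jt: "j \<notin> colours_at E c t"
    define M where "M = {e \<in> E. c e = j}"
    have "\<Union>M = V - {t}"
    proof (intro equalityI subsetI)
      fix v assume "v \<in> \<Union>M"
      then show "v \<in> V - {t}" using E jt by (auto simp: M_def colours_at_def)
    next
      fix v assume v: "v \<in> V - {t}"
      have "j \<in> colours_at E c v"
      proof (cases "v = s")
        case False
        then have "colours_at E c v = {..<k}" using colours_at_eq_lessThan[OF c] full v by simp
        moreover have "j < k" using js colours_at_subset_lessThan[OF c] by blast
        ultimately show ?thesis by simp
      qed (use js in simp)
      then show "v \<in> \<Union>M" by (auto simp: M_def colours_at_def)
    qed
    moreover have "even (card (\<Union>M))"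
    proof (rule even_card_Union_matching)
      show "finite M" using E V(1) by (auto simp: M_def intro: finite_subset[of _ "Pow V"])
      show "\<forall>e\<in>M. card e = 2" using E by (auto simp: M_def)
      show "pairwise disjnt M"
        using c by (auto simp: pairwise_def disjnt_def M_def proper_edge_colouring_def)
    qed
    ultimately show False using V by (simp add: card_Diff_singleton)
  qed
qed

lemma ex_proper_edge_colouring_of_pair_colouring:
  assumes E: "\<forall>e\<in>E. card e = 2"
    and sym: "\<And>u v. f u v = f v u"
    and bound: "\<And>u v. {u, v} \<in> E \<Longrightarrow> f u v < k"
    and inj: "\<And>u v v'. {u, v} \<in> E \<Longrightarrow> {u, v'} \<in> E \<Longrightarrow> v \<noteq> v' \<Longrightarrow>
      f u v \<noteq> f u v'"
  shows "\<exists>c. proper_edge_colouring E c k"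
proof
  define c where "c e = (SOME j. \<exists>u v. e = {u, v} \<and> j = f u v)" for e
  have c_doubleton: "c {u, v} = f u v" for u v
  proof -
    have "\<exists>u' v'. {u, v} = {u', v'} \<and> c {u, v} = f u' v'"
      unfolding c_def by (rule someI_ex) blast
    then show ?thesis using sym by (auto simp: doubleton_eq_iff)
  qed
  show "proper_edge_colouring E c k"
    unfolding proper_edge_colouring_def
  proof (intro conjI ballI impI)
    fix e assume e: "e \<in> E"
    then have "card e = 2" using E by blast
    then obtain u v where "e = {u, v}" unfolding card_2_iff by blast
    then show "c e < k" using e bound c_doubleton by simp
  next
    fix e e' assume ee': "e \<in> E" "e' \<in> E" "e \<noteq> e' \<and> e \<inter> e' \<noteq> {}"
    then obtain u where u: "u \<in> e" "u \<in> e'" by blast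
    have "card e = 2" "card e' = 2" using E ee' by auto
    then obtain v v' where "e = {u, v}" "e' = {u, v'}"
      using u card_2_doubleton_containing by metis
    then show "c e \<noteq> c e'" using ee' inj c_doubleton by auto
  qed
qed

lemma finite_L1_vertices: "finite (L1_vertices w)"
  by (simp add: L1_vertices_def)

lemma card_L1_vertices: "card (L1_vertices w) = w + 2"
  by (simp add: L1_vertices_def card_image)

lemma L1_edge: "e \<in> L1 w \<Longrightarrow> card e = 2 \<and> e \<subseteq> L1_vertices w"
  by (auto simp: L1_def)

lemma doubleton_in_L1_iff:
  "{u, v} \<in> L1 w \<longleftrightarrow>
     u \<in> L1_vertices w \<and> v \<in> L1_vertices w \<and> u \<noteq> v \<and> {u, v} \<notin> L1_removed w"
  by (auto simp: L1_def doubleton_eq_iff)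

lemma Some_doubleton_eq_iff: "{Some a, Some b} = {Some c, Some d} \<longleftrightarrow> {a, b} = {c, d}"
  by (simp add: doubleton_eq_iff)

lemma in_L1_removed_iff:
  "e \<in> L1_removed w \<longleftrightarrow>
     (\<exists>x. 1 \<le> x \<and> x \<le> w div 2 \<and> e = {Some x, Some (w + 1 - x)})
     \<or> e = {Some 1, None} \<or> e = {Some 0, Some 2} \<or> e = {Some 1, Some 2}"
  by (auto simp: L1_removed_def)

lemma Some_Some_in_L1_removed_iff:
  assumes "a \<le> w" "b \<le> w" "a \<noteq> b"
  shows "{Some a, Some b} \<in> L1_removed w \<longleftrightarrow>
    a + b = w + 1 \<or> {a, b} = {0, 2} \<or> {a, b} = {1, 2}"
proof -
  have "(\<exists>x. 1 \<le> x \<and> x \<le> w div 2 \<and> {a, b} = {x, w + 1 - x}) \<longleftrightarrow> a + b = w + 1"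
  proof
    assume "\<exists>x. 1 \<le> x \<and> x \<le> w div 2 \<and> {a, b} = {x, w + 1 - x}"
    then obtain x where "x \<le> w" "{a, b} = {x, w + 1 - x}" by (meson div_le_dividend order_trans)
    then show "a + b = w + 1" by (auto simp: doubleton_eq_iff)
  next
    assume sum: "a + b = w + 1"
    define x where "x = min a b"
    have "{a, b} = {x, w + 1 - x}" using sum by (auto simp: x_def min_def)
    moreover have "1 \<le> x" "2 * x \<le> w" using sum assms by (auto simp: x_def min_def)
    ultimately show "\<exists>x. 1 \<le> x \<and> x \<le> w div 2 \<and> {a, b} = {x, w + 1 - x}" by auto
  qed
  moreover have "{Some a, Some b} \<noteq> {Some 1, None}" by (simp add: doubleton_eq_iff)
  ultimately show ?thesis by (simp add: in_L1_removed_iff Some_doubleton_eq_iff)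
qed

lemma Some_Some_in_L1_iff:
  "{Some a, Some b} \<in> L1 w \<longleftrightarrow>
     a \<le> w \<and> b \<le> w \<and> a \<noteq> b \<and> a + b \<noteq> w + 1 \<and> {a, b} \<noteq> {0, 2} \<and> {a, b} \<noteq> {1, 2}"
proof (cases "a \<le> w \<and> b \<le> w \<and> a \<noteq> b")
  case True
  then show ?thesis
    using Some_Some_in_L1_removed_iff[of a w b] by (simp add: doubleton_in_L1_iff L1_vertices_def)
qed (auto simp: doubleton_in_L1_iff L1_vertices_def)

lemma singleton_notin_L1: "{u} \<notin> L1 w"
  by (auto simp: L1_def)

lemma Some_None_in_L1_iff: "{Some a, None} \<in> L1 w \<longleftrightarrow> a \<le> w \<and> a \<noteq> 1"
  by (auto simp: doubleton_in_L1_iff L1_vertices_def L1_removed_def doubleton_eq_iff)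

lemma None_Some_in_L1_iff: "{None, Some a} \<in> L1 w \<longleftrightarrow> a \<le> w \<and> a \<noteq> 1"
  by (subst insert_commute) (rule Some_None_in_L1_iff)

text \<open>The missed vertex p is 1 for \<infinity>, 2 for 0, and -x for x.\<close>

lemma L1_neighbours:
  assumes "even w" "2 \<le> w" "v \<in> L1_vertices w" "v \<noteq> Some 1" "v \<noteq> Some 2"
  obtains p where "p \<in> L1_vertices w" "p \<noteq> v" "{u. {v, u} \<in> L1 w} = L1_vertices w - {v, p}"
proof (cases v)
  case None
  have "{v, u} \<in> L1 w \<longleftrightarrow> u \<in> L1_vertices w - {v, Some 1}" for u
    using None by (cases u) (auto simp: singleton_notin_L1 None_Some_in_L1_iff L1_vertices_def)
  then show ?thesis using that[of "Some 1"] None assms(2) by (auto simp: L1_vertices_def)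
next
  case (Some a)
  show ?thesis
  proof (cases "a = 0")
    case True
    have "{v, u} \<in> L1 w \<longleftrightarrow> u \<in> L1_vertices w - {v, Some 2}" for u
      using Some True
      by (cases u) (auto simp: singleton_notin_L1 Some_None_in_L1_iff Some_Some_in_L1_iff
          L1_vertices_def doubleton_eq_iff)
    then show ?thesis using that[of "Some 2"] Some True assms(2) by (auto simp: L1_vertices_def)
  next
    case False
    have a: "3 \<le> a" "a \<le> w" using False Some assms(3-5) by (auto simp: L1_vertices_def)
    have "{v, u} \<in> L1 w \<longleftrightarrow> u \<in> L1_vertices w - {v, Some (w + 1 - a)}" for u
      using Some a
      by (cases u) (auto simp: singleton_notin_L1 Some_None_in_L1_iff Some_Some_in_L1_iff
          L1_vertices_def doubleton_eq_iff)
    moreover have "w + 1 - a \<noteq> a" using assms(1) by presburger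
    ultimately show ?thesis using that[of "Some (w + 1 - a)"] Some a by (auto simp: L1_vertices_def)
  qed
qed

lemma card_L1_incident_edges:
  assumes "even w" "2 \<le> w" "v \<in> L1_vertices w - {Some 1, Some 2}"
  shows "card {e \<in> L1 w. v \<in> e} = w"
proof -
  obtain p where p: "p \<in> L1_vertices w" "p \<noteq> v" "{u. {v, u} \<in> L1 w} = L1_vertices w - {v, p}"
    using assms by (auto intro: L1_neighbours)
  have "card {e \<in> L1 w. v \<in> e} = card (L1_vertices w - {v, p})"
    using card_incident_edges_eq_card_neighbours[of "L1 w" v] L1_edge p(3) by auto
  also have "\<dots> = w"
    using p assms(3) by (simp add: card_Diff_subset finite_L1_vertices card_L1_vertices)
  finally show ?thesis .
qed

text \<open>Since 2 (w div 2 + 1) = (w + 1) + 1, mid w a b is (a + b) / 2 in the integers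
  modulo w + 1.\<close>

definition mid :: "nat \<Rightarrow> nat \<Rightarrow> nat \<Rightarrow> nat" where
  "mid w a b = (a + b) * (w div 2 + 1) mod (w + 1)"

lemma coprime_half_plus_one:
  fixes w :: nat
  assumes "even w"
  shows "coprime (w div 2 + 1) (w + 1)"
proof -
  have "(w div 2 + 1) * 2 = (w + 1) + 1" using assms by auto
  then have "coprime ((w div 2 + 1) * 2) (w + 1)" by simp
  then show ?thesis using coprime_mult_left_iff by blast
qed

lemma mid_eq_iff_cong:
  assumes "even w"
  shows "mid w a b = mid w a' b' \<longleftrightarrow> [a + b = a' + b'] (mod w + 1)"
  using cong_mult_rcancel_nat[OF coprime_half_plus_one[OF assms]]
  by (simp add: mid_def cong_def)

lemma mid_cancel:
  assumes "even w" "b \<le> w" "b' \<le> w"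
  shows "mid w a b = mid w a b' \<longleftrightarrow> b = b'"
  using assms
  by (auto simp: mid_eq_iff_cong cong_add_lcancel_nat dest: cong_less_modulus_unique_nat)

lemma mid_self:
  assumes "even w" "a \<le> w"
  shows "mid w a a = a"
proof -
  have "(a + a) * (w div 2 + 1) = a + a * (w + 1)" using assms(1) by (auto elim!: evenE)
  then show ?thesis unfolding mid_def using assms(2) by (simp only: mod_mult_self1) simp
qed

lemma mid_eq_0_iff:
  assumes "even w" "a \<le> w" "b \<le> w"
  shows "mid w a b = 0 \<longleftrightarrow> a + b = 0 \<or> a + b = w + 1"
proof -
  have "mid w a b = 0 \<longleftrightarrow> (a + b) mod (w + 1) = 0"
    using mid_eq_iff_cong[OF assms(1), of a b 0 0] by (simp add: mid_def cong_def)
  also have "\<dots> \<longleftrightarrow> a + b = 0 \<or> a + b = w + 1"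
  proof (cases "a + b \<le> w")
    case False
    then have "(a + b) mod (w + 1) = a + b - (w + 1)" using assms by (simp add: le_mod_geq)
    then show ?thesis using False assms by auto
  qed simp
  finally show ?thesis .
qed

text \<open>The colours are 1 .. w (class 0 consists of the deleted pairs {x, -x}); the colour
  missing at a is mid w a a = a, and that of the deleted edge {0, 2} is mid w 0 2 = 1.\<close>

fun L1_pair_colour :: "nat \<Rightarrow> nat option \<Rightarrow> nat option \<Rightarrow> nat" where
  "L1_pair_colour w (Some a) (Some b) = mid w a b"
| "L1_pair_colour w (Some a) None = (if a = 0 then 1 else a)"
| "L1_pair_colour w None (Some a) = (if a = 0 then 1 else a)"
| "L1_pair_colour w None None = 0"

lemma L1_pair_colour_sym: "L1_pair_colour w u v = L1_pair_colour w v u"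
  by (cases u; cases v) (simp_all add: mid_def add.commute)

lemma L1_pair_colour_Some_None:
  assumes "even w" "2 \<le> w" "a \<le> w"
  shows "L1_pair_colour w (Some a) None = mid w a (if a = 0 then 2 else a)"
proof -
  have "mid w 0 2 = mid w 1 1" by (simp add: mid_def)
  then show ?thesis using assms by (simp add: mid_self)
qed

lemma L1_pair_colour_range:
  assumes "even w" "2 \<le> w" "{u, v} \<in> L1 w"
  shows "0 < L1_pair_colour w u v \<and> L1_pair_colour w u v \<le> w"
proof (cases u; cases v)
  fix a assume "u = None" "v = Some a"
  then show ?thesis using assms by (simp add: None_Some_in_L1_iff)
next
  fix a assume "u = Some a" "v = None"
  then show ?thesis using assms by (simp add: Some_None_in_L1_iff)
next
  fix a b assume "u = Some a" "v = Some b"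
  moreover have "mid w a b \<le> w" by (simp add: mid_def)
  ultimately show ?thesis using assms by (auto simp: Some_Some_in_L1_iff mid_eq_0_iff)
qed (use assms singleton_notin_L1 in auto)

lemma L1_pair_colour_inj:
  assumes "even w" "2 \<le> w" "{u, v} \<in> L1 w" "{u, v'} \<in> L1 w" "v \<noteq> v'"
  shows "L1_pair_colour w u v \<noteq> L1_pair_colour w u v'"
proof (cases u)
  case None
  then obtain a b where "v = Some a" "v' = Some b"
    using assms(3,4) singleton_notin_L1 by (cases v; cases v') auto
  then show ?thesis using None assms by (auto simp: None_Some_in_L1_iff)
next
  case (Some a)
  have Some_ne_None: "L1_pair_colour w (Some a) (Some b) \<noteq> L1_pair_colour w (Some a) None"
    if "{Some a, Some b} \<in> L1 w" "{Some a, None} \<in> L1 w" for b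
  proof -
    have "b \<le> w" "b \<noteq> (if a = 0 then 2 else a)"
      using that by (auto simp: Some_Some_in_L1_iff)
    moreover have "a \<le> w" "(if a = 0 then 2 else a) \<le> w"
      using that(2) assms(2) by (simp_all add: Some_None_in_L1_iff)
    ultimately show ?thesis
      using assms(1,2) by (simp only: L1_pair_colour_Some_None L1_pair_colour.simps(1) mid_cancel) simp
  qed
  show ?thesis
  proof (cases v; cases v')
    fix b b' assume "v = Some b" "v' = Some b'"
    then show ?thesis using Some assms by (auto simp: Some_Some_in_L1_iff mid_cancel)
  next
    fix b assume "v = Some b" "v' = None"
    then show ?thesis using Some assms(3,4) Some_ne_None by metis
  next
    fix b assume "v = None" "v' = Some b"
    then show ?thesis using Some assms(3,4) Some_ne_None by metis
  qed (use assms(5) in simp)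
qed

lemma ex_L1_colouring:
  assumes "even w" "2 \<le> w"
  shows "\<exists>c. proper_edge_colouring (L1 w) c w"
proof (rule ex_proper_edge_colouring_of_pair_colouring)
  show "\<forall>e\<in>L1 w. card e = 2" using L1_edge by blast
  show "L1_pair_colour w u v - 1 = L1_pair_colour w v u - 1" for u v
    by (simp add: L1_pair_colour_sym)
  show "L1_pair_colour w u v - 1 < w" if "{u, v} \<in> L1 w" for u v
    using L1_pair_colour_range[OF assms that] by linarith
  show "L1_pair_colour w u v - 1 \<noteq> L1_pair_colour w u v' - 1"
    if "{u, v} \<in> L1 w" "{u, v'} \<in> L1 w" "v \<noteq> v'" for u v v'
    using L1_pair_colour_inj[OF assms that] L1_pair_colour_range[OF assms that(1)]
      L1_pair_colour_range[OF assms that(2)] by linarith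
qed

lemma chromatic_index_L1:
  assumes "even w" "2 \<le> w"
  shows "chromatic_index (L1 w) = w"
  unfolding chromatic_index_def
proof (rule Least_equality)
  show "\<exists>c. proper_edge_colouring (L1 w) c w" using ex_L1_colouring[OF assms] .
next
  fix k assume "\<exists>c. proper_edge_colouring (L1 w) c k"
  moreover have "card {e \<in> L1 w. Some 0 \<in> e} = w"
    using card_L1_incident_edges[OF assms] by (simp add: L1_vertices_def)
  ultimately show "w \<le> k" using card_incident_edges_le by metis
qed

lemma colours_at_L1_Some_1_eq_Some_2:
  assumes "even w" "2 \<le> w" and c: "proper_edge_colouring (L1 w) c w"
  shows "colours_at (L1 w) c (Some 1) = colours_at (L1 w) c (Some 2)"
proof -
  have edges: "\<forall>e\<in>L1 w. card e = 2 \<and> e \<subseteq> L1_vertices w" using L1_edge by blast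
  have V: "finite (L1_vertices w)" "even (card (L1_vertices w))"
    "Some 1 \<in> L1_vertices w" "Some 2 \<in> L1_vertices w"
    using assms(1,2) by (simp_all add: finite_L1_vertices card_L1_vertices)
      (simp_all add: L1_vertices_def)
  have full: "\<forall>v\<in>L1_vertices w - {Some 1, Some 2}. card {e \<in> L1 w. v \<in> e} = w"
    using card_L1_incident_edges[OF assms(1,2)] by blast
  then have full': "\<forall>v\<in>L1_vertices w - {Some 2, Some 1}. card {e \<in> L1 w. v \<in> e} = w"
    by (simp add: insert_commute)
  show ?thesis
    using colours_at_subset_by_parity[OF c edges V(1,2,4) full]
      colours_at_subset_by_parity[OF c edges V(1,2,3) full'] by (rule equalityI)
qed

theorem lemma12:
  fixes w :: nat
  assumes "even w" and "w \<ge> 4"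
  shows "chromatic_index (L1 w) = w
     \<and> (\<forall>c. proper_edge_colouring (L1 w) c w \<longrightarrow>
            colours_at (L1 w) c (Some 1) = colours_at (L1 w) c (Some 2))"
proof -
  have "2 \<le> w" using assms(2) by simp
  then show ?thesis
    using assms(1) chromatic_index_L1 colours_at_L1_Some_1_eq_Some_2 by blast
qed

end
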